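(* There exists $p\in\mathbb N$ such that $\int_G \sigma(g)^{-p}\,dg<\infty$.
   Context: Let $G$ be a connected simply connected solvable Lie group with Lie algebra $\mathfrak g$ ($m=\dim\mathfrak g$), and let $\mathfrak n$ be the nilradical of $\mathfrak g$. A root of $\mathfrak g$ is a linear form $\lambda$ on $\mathfrak g_{\mathbb C}$ for which there exist an ideal $\mathfrak a$ of $\mathfrak g_{\mathbb C}$ and some $w\notin\mathfrak a$ with $\mathrm{ad}(v)w-\lambda(v)w\in\mathfrak a$ for all $v\in\mathfrak g$. Fix $X\in\mathfrak g$ taking distinct values on distinct roots. Let $\mathfrak g_0=\{Y\in\mathfrak g:\mathrm{ad}(X)^mY=0\}$, and choose a subspace $\mathfrak t\subset\mathfrak g_0$ with $\mathfrak g=\mathfrak t\oplus\mathfrak n$. Realize $G$ as $\mathfrak t\times\mathfrak n$ with product $(t,x)(t',x')=(t+t',P(t,t')\cdot_{\mathrm{CBH}}x\cdot_{\mathrm{CBH}}e^{\mathrm{ad}\,t}x')$. Here $\cdot_{\mathrm{CBH}}$ is the Campbell–Baker–Hausdorff product and $P(T,T')=T\cdot_{\mathrm{CBH}}T'-T-T'$. The subgroup $N=\{0\}\times\mathfrak n$ is the nilradical. The right Haar measure is $dg=dt\,dn$ (Lebesgue). Fix Euclidean norms, with operator norm $\|\cdot\|_{\mathrm{op}}$ on $\mathfrak g$. Fix a symmetric compact neighbourhood $U$ of $e$. Let $|g|_G=\min\{j: g\in U^j\}$ (with $U^0=\{e\}$), and let $|n|_N=\min\{j: n\in (U\cap N)^j\}$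 for $n\in N$. Define $$\sigma(g)=\max(\|\mathrm{Ad}(g)\|_{\mathrm{op}},\|\mathrm{Ad}(g^{-1})\|_{\mathrm{op}})(1+|g|_G+|n|_N)\quad\text{for } g=(t,n).$$ *)

theory Defs
  imports "HOL-Analysis.Analysis"
begin

definition lie_algebra :: "('g::euclidean_space \<Rightarrow> 'g \<Rightarrow> 'g) \<Rightarrow> bool" where
  "lie_algebra br \<longleftrightarrow> bilinear br \<and> (\<forall>x. br x x = 0) \<and>
     (\<forall>x y z. br x (br y z) + br y (br z x) + br z (br x y) = 0)"

definition bracket_set :: "('g::real_vector \<Rightarrow> 'g \<Rightarrow> 'g) \<Rightarrow> 'g set \<Rightarrow> 'g set \<Rightarrow> 'g set" where
  "bracket_set br A B = span {br a b | a b. a \<in> A \<and> b \<in> B}"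

fun derived_series :: "('g::real_vector \<Rightarrow> 'g \<Rightarrow> 'g) \<Rightarrow> nat \<Rightarrow> 'g set" where
  "derived_series br 0 = UNIV"
| "derived_series br (Suc k) = bracket_set br (derived_series br k) (derived_series br k)"

definition solvable_lie :: "('g::real_vector \<Rightarrow> 'g \<Rightarrow> 'g) \<Rightarrow> bool" where
  "solvable_lie br \<longleftrightarrow> (\<exists>k. derived_series br k = {0})"

definition lie_ideal :: "('g::real_vector \<Rightarrow> 'g \<Rightarrow> 'g) \<Rightarrow> 'g set \<Rightarrow> bool" where
  "lie_ideal br I \<longleftrightarrow> subspace I \<and> (\<forall>x y. y \<in> I \<longrightarrow> br x y \<in> I)"

fun lower_central :: "('g::real_vector \<Rightarrow> 'g \<Rightarrow> 'g) \<Rightarrow> 'g set \<Rightarrow> nat \<Rightarrow> 'g set" where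
  "lower_central br I 0 = I"
| "lower_central br I (Suc k) = bracket_set br I (lower_central br I k)"

definition nilpotent_sub :: "('g::real_vector \<Rightarrow> 'g \<Rightarrow> 'g) \<Rightarrow> 'g set \<Rightarrow> bool" where
  "nilpotent_sub br I \<longleftrightarrow> (\<exists>k. lower_central br I k = {0})"

definition nilradical :: "('g::real_vector \<Rightarrow> 'g \<Rightarrow> 'g) \<Rightarrow> 'g set \<Rightarrow> bool" where
  "nilradical br N \<longleftrightarrow> lie_ideal br N \<and> nilpotent_sub br N \<and>
     (\<forall>I. lie_ideal br I \<and> nilpotent_sub br I \<longrightarrow> I \<subseteq> N)"

text \<open>An element \<open>(u,v)\<close> of \<open>'g \<times> 'g\<close> stands for \<open>u + i v \<in> g_C\<close>.\<close>
definition cscale :: "complex \<Rightarrow> 'g::real_vector \<times> 'g \<Rightarrow> 'g \<times> 'g" where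
  "cscale c z = (Re c *\<^sub>R fst z - Im c *\<^sub>R snd z, Re c *\<^sub>R snd z + Im c *\<^sub>R fst z)"

definition cbr :: "('g::real_vector \<Rightarrow> 'g \<Rightarrow> 'g) \<Rightarrow> 'g \<times> 'g \<Rightarrow> 'g \<times> 'g \<Rightarrow> 'g \<times> 'g" where
  "cbr br z w = (br (fst z) (fst w) - br (snd z) (snd w), br (fst z) (snd w) + br (snd z) (fst w))"

definition complex_subspace :: "('g::real_vector \<times> 'g) set \<Rightarrow> bool" where
  "complex_subspace A \<longleftrightarrow> 0 \<in> A \<and> (\<forall>z w. z \<in> A \<longrightarrow> w \<in> A \<longrightarrow> z + w \<in> A) \<and>
     (\<forall>c z. z \<in> A \<longrightarrow> cscale c z \<in> A)"

definition complex_ideal :: "('g::real_vector \<Rightarrow> 'g \<Rightarrow> 'g) \<Rightarrow> ('g \<times> 'g) set \<Rightarrow> bool" where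
  "complex_ideal br A \<longleftrightarrow> complex_subspace A \<and> (\<forall>z w. w \<in> A \<longrightarrow> cbr br z w \<in> A)"

text \<open>A root: a (complex-linear) form on \<open>g_C\<close>, represented by its real-linear restriction to \<open>g\<close>.\<close>
definition is_root :: "('g::real_vector \<Rightarrow> 'g \<Rightarrow> 'g) \<Rightarrow> ('g \<Rightarrow> complex) \<Rightarrow> bool" where
  "is_root br lam \<longleftrightarrow> linear lam \<and>
     (\<exists>A w. complex_ideal br A \<and> w \<notin> A \<and>
        (\<forall>v. cbr br (v, 0) w - cscale (lam v) w \<in> A))"

definition gzero :: "('g::euclidean_space \<Rightarrow> 'g \<Rightarrow> 'g) \<Rightarrow> 'g \<Rightarrow> 'g set" where
  "gzero br X = {Y. ((br X) ^^ DIM('g)) Y = 0}"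

definition expop :: "('g::real_normed_vector \<Rightarrow> 'g) \<Rightarrow> 'g \<Rightarrow> 'g" where
  "expop A y = (\<Sum>k. (1 / fact k) *\<^sub>R (A ^^ k) y)"

fun nest :: "('g::real_vector \<Rightarrow> 'g \<Rightarrow> 'g) \<Rightarrow> 'g list \<Rightarrow> 'g" where
  "nest br [] = 0"
| "nest br [a] = a"
| "nest br (a # b # w) = br a (nest br (b # w))"

definition dynkin_word :: "'g \<Rightarrow> 'g \<Rightarrow> (nat \<times> nat) list \<Rightarrow> 'g list" where
  "dynkin_word x y ps = concat (map (\<lambda>(r, s). replicate r x @ replicate s y) ps)"

definition dynkin_term :: "('g::real_vector \<Rightarrow> 'g \<Rightarrow> 'g) \<Rightarrow> 'g \<Rightarrow> 'g \<Rightarrow> nat \<Rightarrow> 'g" where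
  "dynkin_term br x y n =
     (\<Sum>k\<in>{1..n}. ((-1) ^ (k - 1) / real k) *\<^sub>R
        (\<Sum>ps \<in> {ps. length ps = k \<and> (\<forall>(r, s) \<in> set ps. 0 < r + s) \<and>
                     sum_list (map (\<lambda>(r, s). r + s) ps) = n}.
           (1 / (real n * prod_list (map (\<lambda>(r, s). fact r * fact s) ps))) *\<^sub>R
             nest br (dynkin_word x y ps)))"

definition cbh :: "('g::real_normed_vector \<Rightarrow> 'g \<Rightarrow> 'g) \<Rightarrow> 'g \<Rightarrow> 'g \<Rightarrow> 'g" where
  "cbh br x y = (\<Sum>n. dynkin_term br x y (Suc n))"

definition Pcbh :: "('g::real_normed_vector \<Rightarrow> 'g \<Rightarrow> 'g) \<Rightarrow> 'g \<Rightarrow> 'g \<Rightarrow> 'g" where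
  "Pcbh br t t' = cbh br t t' - t - t'"

definition gmult :: "('g::real_normed_vector \<Rightarrow> 'g \<Rightarrow> 'g) \<Rightarrow> 'g \<times> 'g \<Rightarrow> 'g \<times> 'g \<Rightarrow> 'g \<times> 'g" where
  "gmult br g h = (fst g + fst h,
      cbh br (cbh br (Pcbh br (fst g) (fst h)) (snd g)) (expop (br (fst g)) (snd h)))"

definition ginv :: "('g::real_normed_vector \<Rightarrow> 'g \<Rightarrow> 'g) \<Rightarrow> 'g set \<Rightarrow> 'g set \<Rightarrow> 'g \<times> 'g \<Rightarrow> 'g \<times> 'g" where
  "ginv br T N g = (THE h. h \<in> T \<times> N \<and> gmult br g h = (0, 0))"

text \<open>\<open>Ad(t,x) = e^(ad x) e^(ad t)\<close>, since \<open>(t,x) = exp_N(x) exp(t)\<close>.\<close>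
definition Adg :: "('g::real_normed_vector \<Rightarrow> 'g \<Rightarrow> 'g) \<Rightarrow> 'g \<times> 'g \<Rightarrow> 'g \<Rightarrow> 'g" where
  "Adg br g = expop (br (snd g)) \<circ> expop (br (fst g))"

fun setpow :: "('g::real_normed_vector \<Rightarrow> 'g \<Rightarrow> 'g) \<Rightarrow> ('g \<times> 'g) set \<Rightarrow> nat \<Rightarrow> ('g \<times> 'g) set" where
  "setpow br U 0 = {(0, 0)}"
| "setpow br U (Suc j) = {gmult br g u | g u. g \<in> setpow br U j \<and> u \<in> U}"

definition wordlen :: "('g::real_normed_vector \<Rightarrow> 'g \<Rightarrow> 'g) \<Rightarrow> ('g \<times> 'g) set \<Rightarrow> 'g \<times> 'g \<Rightarrow> nat" where
  "wordlen br U g = (LEAST j. g \<in> setpow br U j)"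

definition sym_compact_nbhd ::
  "('g::real_normed_vector \<Rightarrow> 'g \<Rightarrow> 'g) \<Rightarrow> 'g set \<Rightarrow> 'g set \<Rightarrow> ('g \<times> 'g) set \<Rightarrow> bool" where
  "sym_compact_nbhd br T N U \<longleftrightarrow> U \<subseteq> T \<times> N \<and> compact U \<and>
     (\<exists>V. open V \<and> (0, 0) \<in> V \<and> V \<inter> (T \<times> N) \<subseteq> U) \<and>
     (\<forall>g \<in> U. ginv br T N g \<in> U)"

definition sigma ::
  "('g::real_normed_vector \<Rightarrow> 'g \<Rightarrow> 'g) \<Rightarrow> 'g set \<Rightarrow> 'g set \<Rightarrow> ('g \<times> 'g) set \<Rightarrow> 'g \<times> 'g \<Rightarrow> real" where
  "sigma br T N U g =
     max (onorm (Adg br g)) (onorm (Adg br (ginv br T N g))) *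
     (1 + real (wordlen br U g) + real (wordlen br (U \<inter> ({0} \<times> N)) (0, snd g)))"

definition projT :: "'g::real_vector set \<Rightarrow> 'g set \<Rightarrow> 'g \<Rightarrow> 'g" where
  "projT T N z = (THE t. t \<in> T \<and> z - t \<in> N)"

end

theory Submission
  imports Defs "HOL-Probability.Sinc_Integral"
begin

text \<open>
  Write \<open>g = (t, n)\<close> with \<open>t \<in> T\<close>, \<open>n \<in> N\<close>, and
  \<open>S(g) = 1 + |g|_G + |n|_N\<close>, so that \<open>\<sigma>(g) = max(\<parallel>Ad g\<parallel>, \<parallel>Ad g\<^sup>-\<^sup>1\<parallel>) S(g)\<close>.
  Three estimates show that \<open>1 + \<parallel>(t, n)\<parallel>\<close> is bounded by a polynomial in \<open>\<sigma>(g)\<close>: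
  \<^item> \<open>\<parallel>Ad g\<parallel>\<close> is bounded below on \<open>G\<close>: \<open>Ad(0, n)\<close> fixes a nonzero central element
    of \<open>N\<close>, and \<open>Ad(t, n)\<close> maps \<open>t\<close> into \<open>t + N\<close>;
  \<^item> the \<open>T\<close>-coordinate is additive under the group law, so \<open>\<parallel>t\<parallel> \<le> R |g|_G\<close>;
  \<^item> in the nilpotent group \<open>N\<close> the norm grows polynomially with word length:
    \<open>cbh x y = x + y + (higher brackets)\<close>, and approximating products of \<open>j\<close> generators
    modulo each term of the lower central series gives \<open>\<parallel>n\<parallel> \<le> A (1 + |n|_N)^e\<close>.
  Hence \<open>\<sigma>^-\<^sup>p \<le> C (1 + \<parallel>z\<parallel>)^-\<^sup>2\<^sup>d\<close> for a suitable \<open>p\<close> (\<open>d = dim g\<close>), and the latter is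
  Lebesgue integrable, being dominated by a product of one-dimensional integrable functions.
\<close>

section \<open>Lie algebras: bracket identities and the Dynkin series\<close>

locale lie =
  fixes br :: "'g::euclidean_space \<Rightarrow> 'g \<Rightarrow> 'g"
  assumes lie: "lie_algebra br"
begin

lemma br_bilinear: "bilinear br" using lie unfolding lie_algebra_def by auto

lemma br_linear_left: "linear (\<lambda>x. br x y)" and br_linear_right: "linear (br x)"
  using br_bilinear unfolding bilinear_def by auto

lemma br_zero_left[simp]: "br 0 y = 0" using linear_0[OF br_linear_left] by simp
lemma br_zero_right[simp]: "br x 0 = 0" using linear_0[OF br_linear_right] by simp
lemma br_self[simp]: "br x x = 0" using lie unfolding lie_algebra_def by auto
lemma br_scaleR_left: "br (a *\<^sub>R x) y = a *\<^sub>R br x y" using linear_scale[OF br_linear_left] by simp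
lemma br_scaleR_right: "br x (a *\<^sub>R y) = a *\<^sub>R br x y" using linear_scale[OF br_linear_right] by simp
lemma br_add_left: "br (x + z) y = br x y + br z y" using linear_add[OF br_linear_left] by simp
lemma br_add_right: "br x (y + z) = br x y + br x z" using linear_add[OF br_linear_right] by simp
lemma br_diff_left: "br (x - z) y = br x y - br z y" using linear_diff[OF br_linear_left] by simp
lemma br_diff_right: "br x (y - z) = br x y - br x z" using linear_diff[OF br_linear_right] by simp

lemma br_antisym: "br y x = - br x y"
proof -
  have "0 = br (x + y) (x + y)" by simp
  also have "\<dots> = br x y + br y x" unfolding br_add_left br_add_right by simp
  finally show ?thesis by (simp add: eq_neg_iff_add_eq_0 add.commute)
qed

lemma nest_collinear:
  "set w \<subseteq> range (\<lambda>a. a *\<^sub>R v) \<Longrightarrow> 2 \<le> length w \<Longrightarrow> nest br w = 0"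
proof (induction w)
  case (Cons a w)
  show ?case
  proof (cases w)
    case Nil
    then show ?thesis using Cons.prems by simp
  next
    case (Cons b w')
    show ?thesis
    proof (cases w')
      case Nil
      from Cons.prems \<open>w = b # w'\<close> obtain s s' where "a = s *\<^sub>R v" "b = s' *\<^sub>R v" by auto
      then show ?thesis using Nil \<open>w = b # w'\<close> by (simp add: br_scaleR_left br_scaleR_right)
    next
      case (Cons c w'')
      then have "nest br w = 0" using Cons.IH Cons.prems \<open>w = b # w'\<close> by auto
      then show ?thesis using \<open>w = b # w'\<close> by simp
    qed
  qed
qed auto

end

lemma length_dynkin_word: "length (dynkin_word x y ps) = sum_list (map (\<lambda>(r, s). r + s) ps)"
  unfolding dynkin_word_def by (induction ps) auto

lemma set_dynkin_word: "set (dynkin_word x y ps) \<subseteq> {x, y}"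
  unfolding dynkin_word_def
proof (induction ps)
  case (Cons a ps)
  obtain r s where a: "a = (r, s)" by fastforce
  have "set (replicate r x) \<subseteq> {x, y}" "set (replicate s y) \<subseteq> {x, y}" by auto
  then show ?case using Cons unfolding a
    by (simp only: list.map concat.simps set_append prod.case Un_subset_iff)
qed simp

lemma dynkin_term_1: "dynkin_term br x y 1 = x + y"
proof -
  have "{ps. length ps = 1 \<and> (\<forall>(r, s) \<in> set ps. 0 < r + s) \<and> sum_list (map (\<lambda>(r, s). r + s) ps) = (1::nat)}
      = {[(1, 0)], [(0, 1)]}"
  proof (safe, goal_cases)
    case (1 ps)
    then obtain r s where "ps = [(r, s)]" by (cases ps) (auto simp: length_Suc_conv)
    with 1 show ?case by auto
  qed auto
  then show ?thesis unfolding dynkin_term_def by (simp add: dynkin_word_def)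
qed

lemma dynkin_term_zero:
  assumes "\<And>ps. sum_list (map (\<lambda>(r, s). r + s) ps) = n \<Longrightarrow> nest br (dynkin_word x y ps) = 0"
  shows "dynkin_term br x y n = 0"
  unfolding dynkin_term_def
  by (rule sum.neutral, rule ballI, subst sum.neutral) (auto simp: assms)

lemma cbh_finite:
  assumes "\<And>n. n \<ge> K \<Longrightarrow> dynkin_term br x y (Suc n) = 0"
  shows "cbh br x y = (\<Sum>n<K. dynkin_term br x y (Suc n))"
  unfolding cbh_def by (rule suminf_finite) (auto simp: assms)

lemma expop_finite:
  assumes "\<And>k. k \<ge> K \<Longrightarrow> (A ^^ k) y = 0"
  shows "expop A y = (\<Sum>k<K. (1 / fact k) *\<^sub>R (A ^^ k) y)"
  unfolding expop_def by (rule suminf_finite) (auto simp: assms)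

context lie
begin

lemma cbh_collinear: "cbh br (a *\<^sub>R v) (b *\<^sub>R v) = (a + b) *\<^sub>R v"
proof -
  have "cbh br (a *\<^sub>R v) (b *\<^sub>R v) = (\<Sum>n<1. dynkin_term br (a *\<^sub>R v) (b *\<^sub>R v) (Suc n))"
  proof (rule cbh_finite, rule dynkin_term_zero)
    fix n ps assume "1 \<le> n" "sum_list (map (\<lambda>(r, s). r + s) ps) = Suc n"
    then have "2 \<le> length (dynkin_word (a *\<^sub>R v) (b *\<^sub>R v) ps)"
      by (simp add: length_dynkin_word)
    moreover have "set (dynkin_word (a *\<^sub>R v) (b *\<^sub>R v) ps) \<subseteq> range (\<lambda>c. c *\<^sub>R v)"
      using set_dynkin_word[of "a *\<^sub>R v" "b *\<^sub>R v" ps] by auto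
    ultimately show "nest br (dynkin_word (a *\<^sub>R v) (b *\<^sub>R v) ps) = 0"
      using nest_collinear by blast
  qed
  then show ?thesis using dynkin_term_1[of br "a *\<^sub>R v" "b *\<^sub>R v"] by (simp add: scaleR_add_left)
qed

lemma cbh_zero_left[simp]: "cbh br 0 x = x"
  using cbh_collinear[of 0 x 1] by simp

lemma cbh_zero_right[simp]: "cbh br x 0 = x"
  using cbh_collinear[of 1 x 0] by simp

lemma Pcbh_collinear: "Pcbh br (a *\<^sub>R v) (b *\<^sub>R v) = 0"
  unfolding Pcbh_def cbh_collinear by (simp add: scaleR_add_left)

lemma Pcbh_zero[simp]: "Pcbh br 0 0 = 0"
  using Pcbh_collinear[of 0 0 0] by simp

lemma expop_commuting: assumes "br v w = 0" shows "expop (br v) w = w"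
proof -
  have "((br v) ^^ Suc j) w = 0" for j
    by (induction j) (use assms in auto)
  then have "expop (br v) w = (\<Sum>k<1. (1 / fact k) *\<^sub>R ((br v) ^^ k) w)"
    by (intro expop_finite) (metis Suc_le_D One_nat_def)
  then show ?thesis by simp
qed

lemma expop_br_zero[simp]: "expop (br 0) y = y"
  by (rule expop_commuting) simp

lemma expop_zero[simp]: "expop (br t) 0 = 0"
  by (rule expop_commuting) simp

lemma gmult_zero_fst: "gmult br (0, x) (0, u) = (0, cbh br x u)"
  unfolding gmult_def by simp

end

section \<open>Bounded linearity of \<open>exp\<close>\<close>

lemma norm_funpow_le:
  fixes A :: "'a::real_normed_vector \<Rightarrow> 'a"
  assumes "bounded_linear A"
  shows "norm ((A ^^ k) y) \<le> onorm A ^ k * norm y"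
proof (induction k)
  case (Suc k)
  have "norm ((A ^^ Suc k) y) \<le> onorm A * norm ((A ^^ k) y)"
    using onorm[OF assms] by simp
  also have "\<dots> \<le> onorm A * (onorm A ^ k * norm y)"
    using Suc onorm_pos_le[OF assms] by (rule mult_left_mono)
  finally show ?case by (simp add: mult.assoc)
qed simp

lemma expop_summable:
  fixes A :: "'a::banach \<Rightarrow> 'a"
  assumes "bounded_linear A"
  shows "summable (\<lambda>k. (1 / fact k) *\<^sub>R (A ^^ k) y)"
proof (rule summable_comparison_test')
  show "summable (\<lambda>k. inverse (fact k) * onorm A ^ k * norm y)"
    using summable_exp[of "onorm A"] by (rule summable_mult2)
  show "norm ((1 / fact k) *\<^sub>R (A ^^ k) y) \<le> inverse (fact k) * onorm A ^ k * norm y" for k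
    using norm_funpow_le[OF assms, of k y] by (simp add: divide_inverse mult.assoc mult_left_mono)
qed

lemma linear_funpow:
  fixes A :: "'a::real_vector \<Rightarrow> 'a"
  shows "linear A \<Longrightarrow> linear (A ^^ k)"
proof (induction k)
  case 0
  then show ?case using linear_id by (metis funpow_0 id_apply eq_id_iff)
next
  case (Suc k)
  then show ?case using linear_compose[of "A ^^ k" A] by (simp add: o_def)
qed

lemma expop_bounded_linear:
  fixes A :: "'a::euclidean_space \<Rightarrow> 'a"
  assumes "linear A"
  shows "bounded_linear (expop A)"
proof -
  have bl: "bounded_linear A" using assms linear_conv_bounded_linear by blast
  have "linear (expop A)"
  proof (rule linearI)
    fix x y
    show "expop A (x + y) = expop A x + expop A y"
      unfolding expop_def linear_add[OF linear_funpow[OF assms]] scaleR_add_right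
      by (rule suminf_add[symmetric]) (use expop_summable[OF bl] in auto)
  next
    fix c :: real and x
    have "expop A (c *\<^sub>R x) = (\<Sum>k. c *\<^sub>R ((1 / fact k) *\<^sub>R (A ^^ k) x))"
      unfolding expop_def linear_scale[OF linear_funpow[OF assms]] by (simp add: ac_simps)
    then show "expop A (c *\<^sub>R x) = c *\<^sub>R expop A x"
      unfolding expop_def using suminf_scaleR_right[OF expop_summable[OF bl, of x], of c] by simp
  qed
  then show ?thesis using linear_conv_bounded_linear by blast
qed


section \<open>A nilpotent ideal and its lower central series\<close>

locale nilpotent_ideal = lie br for br :: "'g::euclidean_space \<Rightarrow> 'g \<Rightarrow> 'g" +
  fixes N :: "'g set"
  assumes N_ideal: "lie_ideal br N" and N_nilpotent: "nilpotent_sub br N"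
begin

abbreviation lcs :: "nat \<Rightarrow> 'g set" where "lcs \<equiv> lower_central br N"

lemma N_subspace: "subspace N" using N_ideal unfolding lie_ideal_def by auto
lemma br_N_right: "y \<in> N \<Longrightarrow> br x y \<in> N" using N_ideal unfolding lie_ideal_def by auto
lemma br_N_left: "x \<in> N \<Longrightarrow> br x y \<in> N"
  using br_N_right[of x y] br_antisym[of y x] subspace_neg[OF N_subspace] by (metis minus_minus)

lemma lcs_subspace: "subspace (lcs i)"
  by (cases i) (auto simp: N_subspace bracket_set_def subspace_span)

lemma lcs_subset_N: "lcs i \<subseteq> N"
proof (cases i)
  case (Suc j)
  have "{br a b | a b. a \<in> N \<and> b \<in> lcs j} \<subseteq> N" using br_N_left by auto
  then show ?thesis using Suc by (simp add: bracket_set_def span_minimal N_subspace)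
qed simp

lemma br_lcs_left: "a \<in> N \<Longrightarrow> c \<in> lcs i \<Longrightarrow> br a c \<in> lcs (Suc i)"
  by (auto simp: bracket_set_def intro!: span_base)

lemma br_lcs_right: "a \<in> N \<Longrightarrow> c \<in> lcs i \<Longrightarrow> br c a \<in> lcs (Suc i)"
  using br_lcs_left[of a c i] br_antisym[of c a] subspace_neg[OF lcs_subspace] by metis

lemma lcs_Suc_subset: "lcs (Suc i) \<subseteq> lcs i"
proof (induction i)
  case 0
  then show ?case using lcs_subset_N[of 1] by simp
next
  case (Suc i)
  have "{br a b | a b. a \<in> N \<and> b \<in> lcs (Suc i)} \<subseteq> {br a b | a b. a \<in> N \<and> b \<in> lcs i}"
    using Suc by blast
  then show ?case by (simp only: lower_central.simps bracket_set_def) (rule span_mono)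
qed

lemma lcs_antimono: "i \<le> j \<Longrightarrow> lcs j \<subseteq> lcs i"
  by (induction j rule: dec_induct) (use lcs_Suc_subset in auto)

definition nil_index :: nat where "nil_index = (SOME k. lcs k = {0})"

lemma lcs_nil_index: "lcs nil_index = {0}"
  unfolding nil_index_def by (rule someI_ex) (use N_nilpotent in \<open>auto simp: nilpotent_sub_def\<close>)

lemma lcs_vanish: "nil_index \<le> j \<Longrightarrow> lcs j = {0}"
  using lcs_antimono[of nil_index j] lcs_nil_index subspace_0[OF lcs_subspace, of j] by auto

lemma nest_in_lcs: "set (a # w) \<subseteq> N \<Longrightarrow> nest br (a # w) \<in> lcs (length w)"
proof (induction w arbitrary: a)
  case (Cons b w)
  then have "nest br (b # w) \<in> lcs (length w)" by simp
  then show ?case using Cons.prems br_lcs_left[of a "nest br (b # w)" "length w"] by simp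
qed simp

lemma nest_in_N: "set w \<subseteq> N \<Longrightarrow> nest br w \<in> N"
  using nest_in_lcs[of "hd w" "tl w"] lcs_subset_N subspace_0[OF N_subspace] by (cases w) auto

lemma nest_perturb:
  assumes "list_all2 (\<lambda>a a'. a \<in> N \<and> a' \<in> N \<and> a - a' \<in> lcs i) (a # w) (a' # w')"
  shows "nest br (a # w) - nest br (a' # w') \<in> lcs (if w = [] then i else Suc i)"
  using assms
proof (induction w arbitrary: a a' w')
  case (Cons b v)
  from Cons.prems obtain b' v' where w': "w' = b' # v'" by (cases w') auto
  have "nest br (b # v) - nest br (b' # v') \<in> lcs (if v = [] then i else Suc i)"
    using Cons.IH[of b b' v'] Cons.prems w' by simp
  then have diff: "nest br (b # v) - nest br (b' # v') \<in> lcs i"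
    using lcs_Suc_subset[of i] by (auto split: if_splits)
  have "set (b # v) \<subseteq> N"
    using Cons.prems by (induction v arbitrary: b v' b' w') (auto simp: w' list_all2_Cons1)
  then have "nest br (b # v) \<in> N" by (rule nest_in_N)
  moreover have "a' \<in> N" "a - a' \<in> lcs i" using Cons.prems by auto
  ultimately have "br (a - a') (nest br (b # v)) + br a' (nest br (b # v) - nest br (b' # v'))
      \<in> lcs (Suc i)"
    using diff br_lcs_left br_lcs_right subspace_add[OF lcs_subspace] by blast
  moreover have "nest br (a # b # v) - nest br (a' # b' # v') =
      br (a - a') (nest br (b # v)) + br a' (nest br (b # v) - nest br (b' # v'))"
    by (simp add: br_diff_left br_diff_right)
  ultimately show ?case using w' by (simp del: lower_central.simps)
qed simp

end

lemma dynkin_word_rel: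
  assumes "R x x'" "R y y"
  shows "list_all2 R (dynkin_word x y ps) (dynkin_word x' y ps)"
proof (induction ps)
  case (Cons p ps)
  obtain r s where p: "p = (r, s)" by fastforce
  have "list_all2 R (replicate r x) (replicate r x')" "list_all2 R (replicate s y) (replicate s y)"
    using assms by (auto simp: list_all2_conv_all_nth)
  then show ?case using Cons unfolding dynkin_word_def p
    by (simp only: list.map concat.simps prod.case list_all2_appendI)
qed (simp add: dynkin_word_def)

context nilpotent_ideal
begin

lemma dynkin_term_in_lcs:
  assumes "x \<in> N" "y \<in> N" "1 \<le> n"
  shows "dynkin_term br x y n \<in> lcs (n - 1)"
  unfolding dynkin_term_def
proof (intro subspace_sum[OF lcs_subspace] subspace_scale[OF lcs_subspace], elim CollectE conjE)
  fix k ps assume "sum_list (map (\<lambda>(r, s). r + s) ps) = n"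
  then have len: "length (dynkin_word x y ps) = n" by (simp add: length_dynkin_word)
  have "set (dynkin_word x y ps) \<subseteq> N" using set_dynkin_word[of x y ps] assms by auto
  then show "nest br (dynkin_word x y ps) \<in> lcs (n - 1)"
    using nest_in_lcs[of "hd (dynkin_word x y ps)" "tl (dynkin_word x y ps)"] len assms(3)
    by (cases "dynkin_word x y ps") auto
qed

definition cbh_tail :: "'g \<Rightarrow> 'g \<Rightarrow> 'g" where
  "cbh_tail x y = (\<Sum>n<nil_index. dynkin_term br x y (n + 2))"

lemma cbh_N: assumes "x \<in> N" "y \<in> N" shows "cbh br x y = x + y + cbh_tail x y"
proof -
  have "cbh br x y = (\<Sum>n<Suc nil_index. dynkin_term br x y (Suc n))"
  proof (rule cbh_finite)
    fix n assume "Suc nil_index \<le> n"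
    then show "dynkin_term br x y (Suc n) = 0"
      using dynkin_term_in_lcs[OF assms, of "Suc n"] lcs_vanish[of n] by auto
  qed
  also have "\<dots> = dynkin_term br x y 1 + (\<Sum>n<nil_index. dynkin_term br x y (Suc (Suc n)))"
    by (subst sum.lessThan_Suc_shift) simp
  finally show ?thesis using dynkin_term_1[of br x y] by (simp add: cbh_tail_def numeral_2_eq_2)
qed

lemma cbh_tail_in_N: "x \<in> N \<Longrightarrow> y \<in> N \<Longrightarrow> cbh_tail x y \<in> N"
  unfolding cbh_tail_def
  by (intro subspace_sum[OF N_subspace]) (use dynkin_term_in_lcs lcs_subset_N in fastforce)

lemma cbh_in_N: "x \<in> N \<Longrightarrow> y \<in> N \<Longrightarrow> cbh br x y \<in> N"
  using cbh_N cbh_tail_in_N subspace_add[OF N_subspace] by auto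

lemma cbh_tail_perturb:
  assumes "x \<in> N" "x' \<in> N" "y \<in> N" "x - x' \<in> lcs i"
  shows "cbh_tail x y - cbh_tail x' y \<in> lcs (Suc i)"
  unfolding cbh_tail_def dynkin_term_def sum_subtractf[symmetric] scaleR_diff_right[symmetric]
proof (intro subspace_sum[OF lcs_subspace] subspace_scale[OF lcs_subspace], elim CollectE conjE)
  fix n k and ps :: "(nat \<times> nat) list" assume "sum_list (map (\<lambda>(r, s). r + s) ps) = n + 2"
  then have "length (dynkin_word x y ps) = n + 2" by (simp add: length_dynkin_word)
  then obtain a w where w: "dynkin_word x y ps = a # w" "w \<noteq> []"
    by (cases "dynkin_word x y ps") force+
  have rel: "list_all2 (\<lambda>a a'. a \<in> N \<and> a' \<in> N \<and> a - a' \<in> lcs i)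
      (dynkin_word x y ps) (dynkin_word x' y ps)"
    by (rule dynkin_word_rel) (use assms subspace_0[OF lcs_subspace] in auto)
  then obtain a' w' where "dynkin_word x' y ps = a' # w'"
    using w(1) by (cases "dynkin_word x' y ps") auto
  then show "nest br (dynkin_word x y ps) - nest br (dynkin_word x' y ps) \<in> lcs (Suc i)"
    using nest_perturb[where a=a and w=w and a'=a' and w'=w'] rel w by simp
qed

end

section \<open>Polynomial bounds for the CBH product on \<open>N\<close>\<close>

lemma bilinear_bound_ge_1:
  fixes br :: "'a::euclidean_space \<Rightarrow> 'a \<Rightarrow> 'a"
  assumes "bilinear br"
  shows "\<exists>K\<ge>1. \<forall>a b. norm (br a b) \<le> K * norm a * norm b"
proof -
  obtain K0 where K0: "\<And>a b. norm (br a b) \<le> norm a * norm b * K0"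
    using bounded_bilinear.bounded assms bilinear_conv_bounded_bilinear by blast
  have "norm (br a b) \<le> max 1 K0 * norm a * norm b" for a b
    using K0[of a b] mult_left_mono[of K0 "max 1 K0" "norm a * norm b"] by (simp add: ac_simps)
  then show ?thesis by (intro exI[of _ "max 1 K0"]) auto
qed

lemma nest_bound:
  assumes "\<And>a b. norm (br a b) \<le> K * norm a * norm b" "1 \<le> K" "0 \<le> M"
    and "\<forall>a\<in>set w. norm a \<le> M"
  shows "norm (nest br w) \<le> (K * M) ^ length w"
  using assms(4)
proof (induction w)
  case (Cons a w)
  have KM: "M \<le> K * M" using assms(2,3) by (simp add: mult_right_mono[of 1 K M, simplified])
  show ?case
  proof (cases w)
    case Nil
    then show ?thesis using Cons.prems KM by simp
  next
    case (Cons b w')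
    have "norm (nest br (a # w)) \<le> K * norm a * norm (nest br w)"
      using assms(1) Cons by simp
    also have "\<dots> \<le> K * M * (K * M) ^ length w"
      using Cons.IH Cons.prems assms(2,3) by (intro mult_mono mult_left_mono) auto
    finally show ?thesis by simp
  qed
qed simp

lemma dynkin_term_bound:
  assumes "\<And>a b. norm (br a b) \<le> K * norm a * norm b" "1 \<le> K"
  shows "\<exists>D\<ge>0. \<forall>x y. norm (dynkin_term br x y n) \<le> D * (K * (1 + norm x + norm y)) ^ n"
proof -
  define P where "P k = {ps. length ps = k \<and> (\<forall>(r, s) \<in> set ps. 0 < r + s) \<and>
                     sum_list (map (\<lambda>(r, s). r + s) ps) = n}" for k
  define c where "c ps = 1 / (real n * prod_list (map (\<lambda>(r, s). fact r * fact s) ps))"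
    for ps :: "(nat \<times> nat) list"
  define D where "D = (\<Sum>k\<in>{1..n}. \<bar>(-1) ^ (k - 1) / real k\<bar> * (\<Sum>ps\<in>P k. \<bar>c ps\<bar>))"
  have "norm (dynkin_term br x y n) \<le> D * (K * (1 + norm x + norm y)) ^ n" for x y
  proof -
    define M where "M = 1 + norm x + norm y"
    have nest_le: "norm (nest br (dynkin_word x y ps)) \<le> (K * M) ^ n" if "ps \<in> P k" for k ps
    proof -
      have "norm a \<le> M" if "a \<in> set (dynkin_word x y ps)" for a
        using that set_dynkin_word[of x y ps] unfolding M_def by auto
      then show ?thesis
        using nest_bound[OF assms, of M "dynkin_word x y ps"] that
        by (simp add: M_def P_def length_dynkin_word)
    qed
    have "norm (dynkin_term br x y n) = norm (\<Sum>k\<in>{1..n}. ((-1) ^ (k - 1) / real k) *\<^sub>R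
        (\<Sum>ps\<in>P k. c ps *\<^sub>R nest br (dynkin_word x y ps)))"
      unfolding dynkin_term_def P_def c_def by simp
    also have "\<dots> \<le> (\<Sum>k\<in>{1..n}. \<bar>(-1) ^ (k - 1) / real k\<bar> * (\<Sum>ps\<in>P k. \<bar>c ps\<bar> * (K * M) ^ n))"
    proof (rule order.trans[OF norm_sum], rule sum_mono)
      fix k
      have "norm (\<Sum>ps\<in>P k. c ps *\<^sub>R nest br (dynkin_word x y ps)) \<le> (\<Sum>ps\<in>P k. \<bar>c ps\<bar> * (K * M) ^ n)"
        by (rule order.trans[OF norm_sum], rule sum_mono) (use nest_le in \<open>auto intro: mult_left_mono\<close>)
      then show "norm (((-1) ^ (k - 1) / real k) *\<^sub>R (\<Sum>ps\<in>P k. c ps *\<^sub>R nest br (dynkin_word x y ps)))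
          \<le> \<bar>(-1) ^ (k - 1) / real k\<bar> * (\<Sum>ps\<in>P k. \<bar>c ps\<bar> * (K * M) ^ n)"
        by (simp only: norm_scaleR) (rule mult_left_mono, auto)
    qed
    also have "\<dots> = D * (K * M) ^ n"
      unfolding D_def by (simp add: sum_distrib_right mult.assoc)
    finally show ?thesis unfolding M_def .
  qed
  moreover have "D \<ge> 0" unfolding D_def by (intro sum_nonneg mult_nonneg_nonneg) auto
  ultimately show ?thesis by blast
qed

context nilpotent_ideal
begin

lemma cbh_tail_bound:
  "\<exists>E\<ge>0. \<forall>x y. norm (cbh_tail x y) \<le> E * (1 + norm x + norm y) ^ (nil_index + 1)"
proof -
  obtain K where K1: "1 \<le> K" and K: "\<And>a b. norm (br a b) \<le> K * norm a * norm b"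
    using bilinear_bound_ge_1[OF br_bilinear] by blast
  obtain Df where Df: "\<And>n. Df n \<ge> 0"
    "\<And>n x y. norm (dynkin_term br x y n) \<le> Df n * (K * (1 + norm x + norm y)) ^ n"
    using dynkin_term_bound[OF K K1] by metis
  define E where "E = (\<Sum>n<nil_index. Df (n + 2) * K ^ (nil_index + 1))"
  have "norm (cbh_tail x y) \<le> E * (1 + norm x + norm y) ^ (nil_index + 1)" for x y
  proof -
    define M where "M = 1 + norm x + norm y"
    have "1 \<le> M" unfolding M_def by simp
    then have KM: "1 * 1 \<le> K * M" using K1 by (intro mult_mono) auto
    have "norm (cbh_tail x y) \<le> (\<Sum>n<nil_index. norm (dynkin_term br x y (n + 2)))"
      unfolding cbh_tail_def by (rule norm_sum)
    also have "\<dots> \<le> (\<Sum>n<nil_index. Df (n + 2) * K ^ (nil_index + 1) * M ^ (nil_index + 1))"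
    proof (rule sum_mono)
      fix n assume "n \<in> {..<nil_index}"
      have "norm (dynkin_term br x y (n + 2)) \<le> Df (n + 2) * (K * M) ^ (n + 2)"
        using Df(2) unfolding M_def by blast
      also have "\<dots> \<le> Df (n + 2) * (K * M) ^ (nil_index + 1)"
        using KM \<open>n \<in> {..<nil_index}\<close> Df(1) by (intro mult_left_mono power_increasing) auto
      finally show "norm (dynkin_term br x y (n + 2)) \<le> Df (n + 2) * K ^ (nil_index + 1) * M ^ (nil_index + 1)"
        by (simp add: power_mult_distrib ac_simps)
    qed
    also have "\<dots> = E * M ^ (nil_index + 1)"
      unfolding E_def by (simp add: sum_distrib_right)
    finally show ?thesis unfolding M_def .
  qed
  moreover have "E \<ge> 0" unfolding E_def using Df(1) K1 by (intro sum_nonneg) auto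
  ultimately show ?thesis by blast
qed

end

section \<open>Polynomial growth of word length in \<open>N\<close>\<close>

definition poly_bounded :: "(nat \<Rightarrow> real) \<Rightarrow> bool" where
  "poly_bounded f \<longleftrightarrow> (\<exists>A e. 0 \<le> A \<and> (\<forall>j. f j \<le> A * (1 + real j) ^ e))"

lemma poly_bounded_increments:
  assumes g: "poly_bounded g" and f0: "f 0 \<le> 0" and step: "\<And>j. f (Suc j) \<le> f j + g j"
  shows "poly_bounded f"
proof -
  obtain A e where A: "0 \<le> A" "\<And>j. g j \<le> A * (1 + real j) ^ e"
    using g unfolding poly_bounded_def by blast
  have f_le: "f j \<le> real j * (A * (1 + real j) ^ e)" for j
  proof (induction j)
    case (Suc j)
    have "f (Suc j) \<le> real j * (A * (1 + real j) ^ e) + A * (1 + real j) ^ e"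
      using step[of j] Suc.IH A(2)[of j] by linarith
    also have "\<dots> = real (Suc j) * (A * (1 + real j) ^ e)" by (simp add: algebra_simps)
    also have "\<dots> \<le> real (Suc j) * (A * (1 + real (Suc j)) ^ e)"
      using A(1) by (intro mult_left_mono power_mono) auto
    finally show ?case .
  qed (use f0 in simp)
  have "f j \<le> A * (1 + real j) ^ (Suc e)" for j
  proof -
    have "real j * (A * (1 + real j) ^ e) \<le> (1 + real j) * (A * (1 + real j) ^ e)"
      using A(1) by (intro mult_right_mono) auto
    then show ?thesis using f_le[of j] by (simp add: algebra_simps)
  qed
  then show ?thesis unfolding poly_bounded_def using A(1) by blast
qed

lemma poly_bounded_compose:
  assumes g: "poly_bounded g" and g0: "\<And>j. 0 \<le> g j" and R: "0 \<le> R" and E: "0 \<le> E"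
  shows "poly_bounded (\<lambda>j. R + E * (1 + g j + R) ^ k)"
proof -
  obtain A e where A: "0 \<le> A" "\<And>j. g j \<le> A * (1 + real j) ^ e"
    using g unfolding poly_bounded_def by blast
  have "R + E * (1 + g j + R) ^ k \<le> (R + E * (1 + A + R) ^ k) * (1 + real j) ^ (e * k)" for j
  proof -
    define P where "P = (1 + real j) ^ e"
    have P1: "1 \<le> P" unfolding P_def by simp
    have "1 + g j + R \<le> (1 + A + R) * P"
      using A(2)[of j] P1 mult_left_mono[OF P1 R] unfolding P_def[symmetric]
      by (simp add: algebra_simps)
    then have "(1 + g j + R) ^ k \<le> ((1 + A + R) * P) ^ k"
      using g0[of j] R by (intro power_mono) auto
    also have "\<dots> = (1 + A + R) ^ k * (1 + real j) ^ (e * k)"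
      unfolding P_def by (simp add: power_mult_distrib power_mult)
    finally have "E * (1 + g j + R) ^ k \<le> E * ((1 + A + R) ^ k * (1 + real j) ^ (e * k))"
      using E by (rule mult_left_mono)
    moreover have "R \<le> R * (1 + real j) ^ (e * k)"
      using mult_left_mono[of 1 "(1 + real j) ^ (e * k)" R] R by simp
    ultimately show ?thesis by (simp add: algebra_simps)
  qed
  moreover have "0 \<le> R + E * (1 + A + R) ^ k" using A(1) R E by simp
  ultimately show ?thesis unfolding poly_bounded_def by blast
qed

locale nilpotent_words = nilpotent_ideal br N for br :: "'g::euclidean_space \<Rightarrow> 'g \<Rightarrow> 'g" and N +
  fixes W :: "('g \<times> 'g) set" and R :: real
  assumes W: "\<And>u. u \<in> W \<Longrightarrow> fst u = 0 \<and> snd u \<in> N \<and> norm (snd u) \<le> R"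
    and R_nonneg: "0 \<le> R"
begin

definition tail_const :: real where
  "tail_const = (SOME E. E \<ge> 0 \<and>
     (\<forall>x y. norm (cbh_tail x y) \<le> E * (1 + norm x + norm y) ^ (nil_index + 1)))"

lemma tail_const: "tail_const \<ge> 0"
    "norm (cbh_tail x y) \<le> tail_const * (1 + norm x + norm y) ^ (nil_index + 1)"
  using someI_ex[OF cbh_tail_bound] unfolding tail_const_def[symmetric] by auto

text \<open>\<open>approx_bound i j\<close> bounds the distance from \<open>lcs i\<close> of a product of \<open>j\<close> generators.
  Since \<open>lcs 0 = N\<close> and \<open>cbh x u = x + u + tail\<close> with a tail that only depends on \<open>x\<close>
  modulo \<open>lcs i\<close> up to an error in \<open>lcs (i + 1)\<close>, the bound for level \<open>i + 1\<close> grows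
  additively in \<open>j\<close>, with increments controlled by the bound at level \<open>i\<close>.\<close>
fun approx_bound :: "nat \<Rightarrow> nat \<Rightarrow> real" where
  "approx_bound 0 j = 0"
| "approx_bound (Suc i) 0 = 0"
| "approx_bound (Suc i) (Suc j) = approx_bound (Suc i) j + R
     + tail_const * (1 + approx_bound i j + R) ^ (nil_index + 1)"

lemma approx_bound_nonneg: "0 \<le> approx_bound i j"
  by (induction i j rule: approx_bound.induct) (use R_nonneg tail_const(1) in auto)

lemma approx_bound_0[simp]: "approx_bound i 0 = 0"
  by (cases i) auto

lemma approx_bound_poly: "poly_bounded (approx_bound i)"
proof (induction i)
  case 0
  then show ?case unfolding poly_bounded_def by (intro exI[of _ 0]) auto
next
  case (Suc i)
  have "poly_bounded (\<lambda>j. R + tail_const * (1 + approx_bound i j + R) ^ (nil_index + 1))"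
    using Suc approx_bound_nonneg R_nonneg tail_const(1) by (rule poly_bounded_compose)
  then show ?case by (rule poly_bounded_increments) auto
qed

lemma cbh_approx_step:
  assumes x: "x \<in> N" and u: "u \<in> N" "norm u \<le> R"
    and approx: "\<And>i. \<exists>c\<in>lcs i. norm (x - c) \<le> approx_bound i j"
  shows "\<exists>c\<in>lcs i. norm (cbh br x u - c) \<le> approx_bound i (Suc j)"
proof (cases i)
  case 0
  then show ?thesis using cbh_in_N[OF x u(1)] by (intro bexI[of _ "cbh br x u"]) auto
next
  case (Suc i')
  obtain c1 where c1: "c1 \<in> lcs (Suc i')" "norm (x - c1) \<le> approx_bound (Suc i') j"
    using approx by blast
  obtain c0 where c0: "c0 \<in> lcs i'" "norm (x - c0) \<le> approx_bound i' j"
    using approx by blast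
  define x' where "x' = x - c0"
  have x'N: "x' \<in> N" unfolding x'_def using x c0 lcs_subset_N subspace_diff[OF N_subspace] by blast
  define c where "c = c1 + (cbh_tail x u - cbh_tail x' u)"
  have "x - x' \<in> lcs i'" using c0 unfolding x'_def by simp
  then have "cbh_tail x u - cbh_tail x' u \<in> lcs (Suc i')" by (rule cbh_tail_perturb[OF x x'N u(1)])
  then have "c \<in> lcs (Suc i')" unfolding c_def by (rule subspace_add[OF lcs_subspace c1(1)])
  moreover have "norm (cbh br x u - c) \<le> approx_bound (Suc i') (Suc j)"
  proof -
    have "cbh br x u - c = (x - c1) + u + cbh_tail x' u"
      unfolding c_def cbh_N[OF x u(1)] by (simp add: algebra_simps)
    then have "norm (cbh br x u - c) \<le> norm (x - c1) + norm u + norm (cbh_tail x' u)"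
      by (metis norm_triangle_ineq order.trans add_right_mono)
    moreover have "(1 + norm x' + norm u) ^ (nil_index + 1) \<le> (1 + approx_bound i' j + R) ^ (nil_index + 1)"
      using c0 u unfolding x'_def by (intro power_mono) auto
    then have "norm (cbh_tail x' u) \<le> tail_const * (1 + approx_bound i' j + R) ^ (nil_index + 1)"
      using tail_const(1) tail_const(2)[of x' u] by (meson mult_left_mono order.trans)
    ultimately show ?thesis using c1 u by simp
  qed
  ultimately show ?thesis using Suc by blast
qed

lemma setpow_W_approx:
  "g \<in> setpow br W j \<Longrightarrow> fst g = 0 \<and> snd g \<in> N \<and> (\<forall>i. \<exists>c\<in>lcs i. norm (snd g - c) \<le> approx_bound i j)"
proof (induction j arbitrary: g)
  case 0
  then show ?case by (auto intro!: bexI[of _ 0] simp: subspace_0[OF lcs_subspace] subspace_0[OF N_subspace])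
next
  case (Suc j)
  then obtain h u where g: "g = gmult br h u" and h: "h \<in> setpow br W j" and u: "u \<in> W"
    by auto
  obtain x where hx: "h = (0, x)" "x \<in> N" and approx: "\<And>i. \<exists>c\<in>lcs i. norm (x - c) \<le> approx_bound i j"
    using Suc.IH[OF h] by (metis prod.collapse)
  obtain v where uv: "u = (0, v)" "v \<in> N" "norm v \<le> R" using W[OF u] by (metis prod.collapse)
  have "g = (0, cbh br x v)" unfolding g hx uv gmult_zero_fst ..
  then show ?case using cbh_in_N[OF hx(2) uv(2)] cbh_approx_step[OF hx(2) uv(2,3) approx] by simp
qed

text \<open>Polynomial growth: products of \<open>j\<close> generators have norm \<open>O(j^e)\<close>; this is the
  level \<open>nil_index\<close> of the approximation, where \<open>lcs nil_index = {0}\<close>.\<close>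
lemma word_norm_growth:
  "\<exists>A e. 0 \<le> A \<and> (\<forall>j g. g \<in> setpow br W j \<longrightarrow> norm (snd g) \<le> A * (1 + real j) ^ e)"
proof -
  obtain A e where A: "0 \<le> A" "\<And>j. approx_bound nil_index j \<le> A * (1 + real j) ^ e"
    using approx_bound_poly unfolding poly_bounded_def by blast
  have "norm (snd g) \<le> A * (1 + real j) ^ e" if g: "g \<in> setpow br W j" for j g
  proof -
    obtain c where "c \<in> lcs nil_index" "norm (snd g - c) \<le> approx_bound nil_index j"
      using setpow_W_approx[OF g] by blast
    then show ?thesis using lcs_nil_index A(2)[of j] by auto
  qed
  then show ?thesis using A(1) by blast
qed

end

section \<open>The adjoint representation is bounded below\<close>

context lie
begin

lemma Adg_bounded_linear: "bounded_linear (Adg br g)"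
  unfolding Adg_def o_def
  by (rule bounded_linear_compose[OF expop_bounded_linear expop_bounded_linear]) (rule br_linear_right)+

end

context nilpotent_ideal
begin

lemma funpow_br_N: "n \<in> N \<Longrightarrow> ((br n) ^^ Suc j) y \<in> lcs j"
proof (induction j)
  case 0
  then show ?case using br_N_left by simp
next
  case (Suc j)
  then show ?case using br_lcs_left by simp
qed

lemma expop_N: assumes "n \<in> N" shows "expop (br n) y - y \<in> N"
proof -
  have "expop (br n) y = (\<Sum>k<Suc nil_index. (1 / fact k) *\<^sub>R ((br n) ^^ k) y)"
  proof (rule expop_finite)
    fix k assume "Suc nil_index \<le> k"
    then obtain j where "k = Suc j" "nil_index \<le> j" by (cases k) auto
    then show "((br n) ^^ k) y = 0" using funpow_br_N[OF assms, of j] lcs_vanish by auto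
  qed
  also have "\<dots> = y + (\<Sum>k<nil_index. (1 / fact (Suc k)) *\<^sub>R ((br n) ^^ Suc k) y)"
    by (subst sum.lessThan_Suc_shift) simp
  finally have "expop (br n) y - y = (\<Sum>k<nil_index. (1 / fact (Suc k)) *\<^sub>R ((br n) ^^ Suc k) y)"
    by simp
  also have "\<dots> \<in> N"
    by (intro subspace_sum[OF N_subspace] subspace_scale[OF N_subspace])
      (use funpow_br_N[OF assms] lcs_subset_N in blast)
  finally show ?thesis .
qed

text \<open>Some nonzero vector is annihilated by \<open>ad N\<close>: the last nonzero term of the lower
  central series (or anything, if \<open>N = 0\<close>).\<close>
lemma central_vector_ex: "\<exists>v. v \<noteq> 0 \<and> (\<forall>m\<in>N. br m v = 0)"
proof -
  define i0 where "i0 = (LEAST i. lcs i = {0})"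
  have lcs_i0: "lcs i0 = {0}" unfolding i0_def by (rule LeastI[of _ nil_index]) (rule lcs_nil_index)
  show ?thesis
  proof (cases i0)
    case 0
    obtain v :: 'g where "v \<in> Basis" using SOME_Basis by blast
    then show ?thesis using lcs_i0 0 nonzero_Basis by auto
  next
    case (Suc i)
    have "lcs i \<noteq> {0}" using Least_le[of "\<lambda>i. lcs i = {0}" i] unfolding i0_def[symmetric] Suc by auto
    then obtain v where v: "v \<in> lcs i" "v \<noteq> 0" using subspace_0[OF lcs_subspace, of i] by blast
    have "br m v \<in> lcs i0" if "m \<in> N" for m using br_lcs_left[OF that v(1)] Suc by simp
    then show ?thesis using v(2) lcs_i0 by auto
  qed
qed

end

locale complemented = nilpotent_ideal br N for br :: "'g::euclidean_space \<Rightarrow> 'g \<Rightarrow> 'g" and N +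
  fixes T :: "'g set"
  assumes T_subspace: "subspace T" and T_N_trivial: "T \<inter> N = {0}"
    and T_N_span: "{t + n | t n. t \<in> T \<and> n \<in> N} = UNIV"
begin

lemma projT_unique: assumes "t \<in> T" "z - t \<in> N" shows "projT T N z = t"
  unfolding projT_def
proof (rule the_equality)
  fix t' assume t': "t' \<in> T \<and> z - t' \<in> N"
  have "t' - t \<in> T" using t' assms subspace_diff[OF T_subspace] by blast
  moreover have "(z - t) - (z - t') \<in> N" using t' assms subspace_diff[OF N_subspace] by blast
  then have "t' - t \<in> N" by simp
  ultimately have "t' - t \<in> T \<inter> N" by blast
  then show "t' = t" using T_N_trivial by simp
qed (use assms in simp)

lemma projT_in_T: "projT T N z \<in> T" and projT_rest_in_N: "z - projT T N z \<in> N"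
proof -
  have "z \<in> {t + n | t n. t \<in> T \<and> n \<in> N}" using T_N_span by simp
  then obtain t n where "z = t + n" "t \<in> T" "n \<in> N" by blast
  then have "projT T N z = t" by (intro projT_unique) auto
  then show "projT T N z \<in> T" "z - projT T N z \<in> N" using \<open>z = t + n\<close> \<open>t \<in> T\<close> \<open>n \<in> N\<close> by auto
qed

lemma projT_linear: "linear (projT T N)"
proof (rule linearI)
  fix x y
  have "(x - projT T N x) + (y - projT T N y) \<in> N"
    using projT_rest_in_N subspace_add[OF N_subspace] by blast
  then show "projT T N (x + y) = projT T N x + projT T N y"
    using projT_in_T subspace_add[OF T_subspace]
    by (intro projT_unique) (simp_all add: algebra_simps)
next
  fix c :: real and x
  have "c *\<^sub>R (x - projT T N x) \<in> N" using projT_rest_in_N subspace_scale[OF N_subspace] by blast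
  then show "projT T N (c *\<^sub>R x) = c *\<^sub>R projT T N x"
    using projT_in_T subspace_scale[OF T_subspace]
    by (intro projT_unique) (simp_all add: scaleR_diff_right)
qed

lemma projT_Adg: assumes "t \<in> T" "n \<in> N" shows "projT T N (Adg br (t, n) t) = t"
proof -
  have "Adg br (t, n) t = expop (br n) t" unfolding Adg_def by (simp add: expop_commuting)
  then show ?thesis using expop_N[OF assms(2), of t] assms(1) by (simp add: projT_unique)
qed

lemma onorm_Adg_lower: "\<exists>c>0. \<forall>t\<in>T. \<forall>n\<in>N. c \<le> onorm (Adg br (t, n))"
proof -
  obtain K where K: "K > 0" "\<And>z. norm (projT T N z) \<le> norm z * K"
    using projT_linear linear_conv_bounded_linear bounded_linear.pos_bounded by blast
  obtain v where v: "v \<noteq> 0" "\<And>m. m \<in> N \<Longrightarrow> br m v = 0" using central_vector_ex by blast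
  have "min 1 (1 / K) \<le> onorm (Adg br (t, n))" if t: "t \<in> T" and n: "n \<in> N" for t n
  proof (cases "t = 0")
    case True
    have "Adg br (t, n) v = v" unfolding Adg_def True using expop_commuting[OF v(2)[OF n]] by simp
    then have "norm v \<le> onorm (Adg br (t, n)) * norm v" using onorm[OF Adg_bounded_linear, of "(t, n)" v] by simp
    then show ?thesis using v(1) by simp
  next
    case False
    have "norm t \<le> norm (Adg br (t, n) t) * K" using K(2)[of "Adg br (t, n) t"] projT_Adg[OF t n] by simp
    also have "\<dots> \<le> onorm (Adg br (t, n)) * norm t * K"
      using onorm[OF Adg_bounded_linear] K(1) by (intro mult_right_mono) auto
    finally have "1 * norm t \<le> (onorm (Adg br (t, n)) * K) * norm t" by (simp add: ac_simps)
    then have "1 / K \<le> onorm (Adg br (t, n))" using False K(1) by (simp add: field_simps)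
    then show ?thesis by simp
  qed
  then show ?thesis using K(1) by (intro exI[of _ "min 1 (1 / K)"]) auto
qed

end

section \<open>Word lengths in \<open>G\<close>\<close>

lemma setpow_mono: assumes "X \<subseteq> Y" shows "setpow br X j \<subseteq> setpow br Y j"
proof (induction j)
  case (Suc j)
  show ?case
  proof
    fix g assume "g \<in> setpow br X (Suc j)"
    then obtain h u where "g = gmult br h u" "h \<in> setpow br X j" "u \<in> X" by auto
    then show "g \<in> setpow br Y (Suc j)" using Suc assms unfolding setpow.simps by blast
  qed
qed simp

lemma setpow_wordlen: "\<exists>j. g \<in> setpow br X j \<Longrightarrow> g \<in> setpow br X (wordlen br X g)"
  unfolding wordlen_def by (rule LeastI_ex)

text \<open>The \<open>T\<close>-coordinate is additive, so it grows at most linearly with word length.\<close>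
lemma setpow_fst_bound:
  assumes "\<And>u. u \<in> X \<Longrightarrow> norm (fst u) \<le> R"
  shows "g \<in> setpow br X j \<Longrightarrow> norm (fst g) \<le> real j * R"
proof (induction j arbitrary: g)
  case (Suc j)
  then obtain h u where "g = gmult br h u" "h \<in> setpow br X j" "u \<in> X" by auto
  then have "fst g = fst h + fst u" "norm (fst h) \<le> real j * R" "norm (fst u) \<le> R"
    using Suc.IH assms by (auto simp: gmult_def)
  then show ?case using norm_triangle_ineq[of "fst h" "fst u"] by (simp add: algebra_simps)
qed simp

lemma small_fraction:
  fixes m :: "'a::real_normed_vector"
  assumes "\<epsilon> > 0"
  shows "\<exists>j::nat. 0 < j \<and> norm ((1 / real j) *\<^sub>R m) < \<epsilon> \<and> real j *\<^sub>R ((1 / real j) *\<^sub>R m) = m"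
proof -
  obtain j :: nat where j: "norm m / \<epsilon> < real j" using reals_Archimedean2 by blast
  then have j0: "0 < j" using assms by (metis divide_nonneg_pos norm_ge_zero of_nat_0_less_iff order.strict_trans1)
  have "norm ((1 / real j) *\<^sub>R m) = norm m / real j" by simp
  also have "\<dots> < \<epsilon>" using j j0 assms by (simp add: field_simps)
  finally show ?thesis using j0 by auto
qed

context lie
begin

lemma setpow_SucI: "h \<in> setpow br X n \<Longrightarrow> u \<in> X \<Longrightarrow> gmult br h u \<in> setpow br X (Suc n)"
  unfolding setpow.simps by blast

lemma setpow_N_line: "(0, a) \<in> X \<Longrightarrow> (0, real i *\<^sub>R a) \<in> setpow br X i"
proof (induction i)
  case (Suc i)
  have "gmult br (0, real i *\<^sub>R a) (0, 1 *\<^sub>R a) = (0, real (Suc i) *\<^sub>R a)"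
    unfolding gmult_zero_fst cbh_collinear by simp
  then show ?case using setpow_SucI[OF Suc.IH[OF Suc.prems] Suc.prems] by simp
qed simp

lemma setpow_T_line:
  assumes "(0, m) \<in> setpow br X j" "(s, 0) \<in> X"
  shows "(real i *\<^sub>R s, m) \<in> setpow br X (j + i)"
proof (induction i)
  case (Suc i)
  have "gmult br (real i *\<^sub>R s, m) (s, 0) = (real (Suc i) *\<^sub>R s, m)"
    using Pcbh_collinear[of "real i" s 1] unfolding gmult_def by (simp add: algebra_simps)
  then show ?case using setpow_SucI[OF Suc.IH assms(2)] by simp
qed (use assms in simp)

end

locale compact_nbhd = complemented br N T for br :: "'g::euclidean_space \<Rightarrow> 'g \<Rightarrow> 'g" and N T +
  fixes U :: "('g \<times> 'g) set"
  assumes U_subset: "U \<subseteq> T \<times> N" and U_compact: "compact U"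
    and U_nbhd: "\<exists>V. open V \<and> (0, 0) \<in> V \<and> V \<inter> (T \<times> N) \<subseteq> U"
begin

definition W :: "('g \<times> 'g) set" where "W = U \<inter> ({0} \<times> N)"

lemma small_in_U: "\<exists>\<epsilon>>0. \<forall>s m. s \<in> T \<longrightarrow> m \<in> N \<longrightarrow> norm (s, m) < \<epsilon> \<longrightarrow> (s, m) \<in> U"
proof -
  obtain V where V: "open V" "(0, 0) \<in> V" "V \<inter> (T \<times> N) \<subseteq> U" using U_nbhd by blast
  then obtain \<epsilon> where e: "\<epsilon> > 0" "ball (0, 0) \<epsilon> \<subseteq> V" using open_contains_ball by blast
  have "(s, m) \<in> U" if "s \<in> T" "m \<in> N" "norm (s, m) < \<epsilon>" for s m
  proof -
    have "(s, m) \<in> ball (0, 0) \<epsilon>" using that(3) by (simp add: dist_norm norm_Pair)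
    then show ?thesis using e V that by blast
  qed
  then show ?thesis using e(1) by blast
qed

lemma U_bounded: "\<exists>R\<ge>0. \<forall>u\<in>U. norm (fst u) \<le> R \<and> norm (snd u) \<le> R"
proof -
  obtain R where R: "\<forall>u\<in>U. norm u \<le> R" using compact_imp_bounded[OF U_compact] bounded_iff by blast
  have "norm (fst u) \<le> max R 0 \<and> norm (snd u) \<le> max R 0" if "u \<in> U" for u
  proof -
    have "norm (fst u) \<le> norm u" "norm (snd u) \<le> norm u"
      by (cases u, simp add: norm_fst_le norm_snd_le)+
    then show ?thesis using R that by fastforce
  qed
  then show ?thesis by (intro exI[of _ "max R 0"]) auto
qed

lemma W_generates: assumes "m \<in> N" shows "\<exists>j. (0, m) \<in> setpow br W j"
proof -
  obtain \<epsilon> where e: "\<epsilon> > 0" "\<And>s m. s \<in> T \<Longrightarrow> m \<in> N \<Longrightarrow> norm (s, m) < \<epsilon> \<Longrightarrow> (s, m) \<in> U"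
    using small_in_U by blast
  obtain j :: nat where j: "norm ((1 / real j) *\<^sub>R m) < \<epsilon>" "real j *\<^sub>R ((1 / real j) *\<^sub>R m) = m"
    using small_fraction[OF e(1)] by blast
  have aN: "(1 / real j) *\<^sub>R m \<in> N" using assms subspace_scale[OF N_subspace] by blast
  then have "(0, (1 / real j) *\<^sub>R m) \<in> W"
    using e(2)[OF subspace_0[OF T_subspace] aN] j(1) by (simp add: W_def norm_Pair)
  then show ?thesis using setpow_N_line j(2) by metis
qed

lemma U_generates: assumes "t \<in> T" "m \<in> N" shows "\<exists>j. (t, m) \<in> setpow br U j"
proof -
  obtain \<epsilon> where e: "\<epsilon> > 0" "\<And>s m. s \<in> T \<Longrightarrow> m \<in> N \<Longrightarrow> norm (s, m) < \<epsilon> \<Longrightarrow> (s, m) \<in> U"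
    using small_in_U by blast
  obtain j1 where "(0, m) \<in> setpow br W j1" using W_generates[OF assms(2)] by blast
  then have m: "(0, m) \<in> setpow br U j1" using setpow_mono[of W U] by (auto simp: W_def)
  obtain j :: nat where j: "norm ((1 / real j) *\<^sub>R t) < \<epsilon>" "real j *\<^sub>R ((1 / real j) *\<^sub>R t) = t"
    using small_fraction[OF e(1)] by blast
  have "(1 / real j) *\<^sub>R t \<in> T" using assms subspace_scale[OF T_subspace] by blast
  then have "((1 / real j) *\<^sub>R t, 0) \<in> U"
    using e(2)[OF _ subspace_0[OF N_subspace]] j(1) by (simp add: norm_Pair)
  then show ?thesis using setpow_T_line[OF m] j(2) by metis
qed

end

section \<open>\<open>\<sigma>\<close> dominates a power of \<open>1 + \<parallel>z\<parallel>\<close>\<close>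

context compact_nbhd
begin

definition word_size :: "'g \<Rightarrow> 'g \<Rightarrow> real" where
  "word_size t n = 1 + real (wordlen br U (t, n)) + real (wordlen br W (0, n))"

lemma sigma_ge_word_size: "\<exists>c>0. \<forall>t\<in>T. \<forall>n\<in>N. c * word_size t n \<le> sigma br T N U (t, n)"
proof -
  obtain c where c: "c > 0" "\<And>t n. t \<in> T \<Longrightarrow> n \<in> N \<Longrightarrow> c \<le> onorm (Adg br (t, n))"
    using onorm_Adg_lower by blast
  have "c * word_size t n \<le> sigma br T N U (t, n)" if "t \<in> T" "n \<in> N" for t n
    unfolding sigma_def word_size_def W_def[symmetric] snd_conv
    using c(2)[OF that] by (intro mult_right_mono) auto
  then show ?thesis using c(1) by blast
qed

lemma norm_le_word_size: "\<exists>B\<ge>1. \<exists>q. \<forall>t\<in>T. \<forall>n\<in>N. 1 + norm (t + n) \<le> B * word_size t n ^ q"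
proof -
  obtain R where R: "R \<ge> 0" "\<And>u. u \<in> U \<Longrightarrow> norm (fst u) \<le> R \<and> norm (snd u) \<le> R"
    using U_bounded by blast
  interpret nilpotent_words br N W R
    by unfold_locales (use R in \<open>auto simp: W_def\<close>)
  obtain A e where A: "0 \<le> A" "\<And>j g. g \<in> setpow br W j \<Longrightarrow> norm (snd g) \<le> A * (1 + real j) ^ e"
    using word_norm_growth by blast
  have "1 + norm (t + n) \<le> (1 + R + A) * word_size t n ^ Suc e" if t: "t \<in> T" and n: "n \<in> N" for t n
  proof -
    define S where "S = word_size t n"
    have S1: "1 \<le> S" unfolding S_def word_size_def by simp
    have pow: "1 \<le> S ^ Suc e" "S ^ 1 \<le> S ^ Suc e" "S ^ e \<le> S ^ Suc e"
      by (rule one_le_power[OF S1]) (rule power_increasing[OF _ S1], simp)+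
    have "norm t \<le> real (wordlen br U (t, n)) * R"
      using setpow_fst_bound[of U R, OF _ setpow_wordlen[OF U_generates[OF t n]]] R(2) by simp
    also have "\<dots> \<le> S ^ Suc e * R"
    proof (rule mult_right_mono)
      have "real (wordlen br U (t, n)) \<le> S" unfolding S_def word_size_def by simp
      then show "real (wordlen br U (t, n)) \<le> S ^ Suc e" using pow(2) by simp
    qed (rule R(1))
    finally have "norm t \<le> R * S ^ Suc e" by (simp add: mult.commute)
    moreover have "norm n \<le> A * (1 + real (wordlen br W (0, n))) ^ e"
      using A(2)[OF setpow_wordlen[OF W_generates[OF n]]] by simp
    then have "norm n \<le> A * S ^ Suc e"
      using A(1) pow(3) order_trans[OF _ power_mono[of "1 + real (wordlen br W (0, n))" S e]]
      unfolding S_def word_size_def by (smt (verit) mult_left_mono of_nat_0_le_iff)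
    ultimately show ?thesis
      using norm_triangle_ineq[of t n] pow(1) unfolding S_def by (simp add: algebra_simps)
  qed
  then show ?thesis using R(1) A(1) by (intro exI[of _ "1 + R + A"] conjI exI[of _ "Suc e"]) auto
qed

lemma sigma_poly_lower_bound:
  "\<exists>\<kappa>>0. \<exists>p. \<forall>z. \<kappa> * (1 + norm z) ^ (2 * DIM('g)) \<le> sigma br T N U (projT T N z, z - projT T N z) ^ p"
proof -
  obtain c where c: "c > 0" "\<And>t n. t \<in> T \<Longrightarrow> n \<in> N \<Longrightarrow> c * word_size t n \<le> sigma br T N U (t, n)"
    using sigma_ge_word_size by blast
  obtain B q where B: "B \<ge> 1" "\<And>t n. t \<in> T \<Longrightarrow> n \<in> N \<Longrightarrow> 1 + norm (t + n) \<le> B * word_size t n ^ q"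
    using norm_le_word_size by blast
  define d where "d = 2 * DIM('g)"
  have "c ^ (q * d) / B ^ d * (1 + norm z) ^ d \<le> sigma br T N U (projT T N z, z - projT T N z) ^ (q * d)" for z
  proof -
    define t where "t = projT T N z"
    have t: "t \<in> T" "z - t \<in> N" unfolding t_def using projT_in_T projT_rest_in_N by auto
    have "(1 + norm z) ^ d \<le> (B * word_size t (z - t) ^ q) ^ d"
      using B(2)[OF t] by (intro power_mono) auto
    then have "(1 + norm z) ^ d \<le> B ^ d * word_size t (z - t) ^ (q * d)"
      by (simp only: power_mult_distrib power_mult)
    then have "c ^ (q * d) / B ^ d * (1 + norm z) ^ d
        \<le> c ^ (q * d) / B ^ d * (B ^ d * word_size t (z - t) ^ (q * d))"
      using c(1) B(1) by (intro mult_left_mono) auto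
    also have "\<dots> = (c * word_size t (z - t)) ^ (q * d)"
      using B(1) by (simp add: power_mult_distrib)
    also have "\<dots> \<le> sigma br T N U (t, z - t) ^ (q * d)"
      using c t by (intro power_mono) (auto simp: word_size_def)
    finally show ?thesis unfolding t_def .
  qed
  moreover have "c ^ (q * d) / B ^ d > 0" using c(1) B(1) by simp
  ultimately show ?thesis unfolding d_def by blast
qed

end

section \<open>Integrability of \<open>(1 + \<parallel>z\<parallel>)^-\<^sup>2\<^sup>d\<close>\<close>

lemma nn_integral_one_plus_abs_sq: "(\<integral>\<^sup>+ x. ennreal (1 / (1 + \<bar>x\<bar>) ^ 2) \<partial>lborel) < \<infinity>"
proof -
  have "integrable lborel (\<lambda>x::real. inverse (1 + x^2))"
    using integrable_inverse_1_plus_square by (simp add: set_integrable_def)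
  then have "(\<integral>\<^sup>+ x. ennreal (norm (inverse (1 + (x::real)^2))) \<partial>lborel) < \<infinity>"
    unfolding integrable_iff_bounded by (rule conjunct2)
  moreover have "(\<integral>\<^sup>+ x. ennreal (1 / (1 + \<bar>x\<bar>) ^ 2) \<partial>lborel)
      \<le> (\<integral>\<^sup>+ x. ennreal (norm (inverse (1 + (x::real)^2))) \<partial>lborel)"
  proof (rule nn_integral_mono)
    fix x :: real
    have "1 + x^2 \<le> (1 + \<bar>x\<bar>)^2" by (simp add: power2_eq_square algebra_simps)
    then have "1 / (1 + \<bar>x\<bar>) ^ 2 \<le> inverse (1 + x^2)"
      by (simp add: divide_simps power_divide[symmetric] add_pos_nonneg)
    then show "ennreal (1 / (1 + \<bar>x\<bar>) ^ 2) \<le> ennreal (norm (inverse (1 + x^2)))"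
      by (simp add: ennreal_leI add_pos_nonneg)
  qed
  ultimately show ?thesis by (meson order.strict_trans1)
qed

text \<open>On \<open>\<real>^d\<close>, \<open>(1 + \<parallel>z\<parallel>)^-\<^sup>2\<^sup>d\<close> is dominated by \<open>\<Prod>\<^sub>i (1 + |z\<^sub>i|)^-\<^sup>2\<close>, which is integrable by Fubini.\<close>
lemma nn_integral_poly_decay:
  "(\<integral>\<^sup>+ z. ennreal (1 / (1 + norm z) ^ (2 * DIM('a))) \<partial>(lborel :: 'a::euclidean_space measure)) < \<infinity>"
proof -
  have "(\<integral>\<^sup>+ z. ennreal (1 / (1 + norm z) ^ (2 * DIM('a))) \<partial>(lborel :: 'a measure))
      \<le> (\<integral>\<^sup>+ z. (\<Prod>b\<in>(Basis::'a set). ennreal (1 / (1 + \<bar>z \<bullet> b\<bar>) ^ 2)) \<partial>lborel)"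
  proof (rule nn_integral_mono)
    fix z :: 'a
    have "(\<Prod>b\<in>(Basis::'a set). (1 + \<bar>z \<bullet> b\<bar>) ^ 2) \<le> (\<Prod>b\<in>(Basis::'a set). (1 + norm z) ^ 2)"
      by (intro prod_mono conjI power_mono) (auto simp: Basis_le_norm)
    also have "\<dots> = (1 + norm z) ^ (2 * DIM('a))" by (simp add: power_mult[symmetric] mult.commute)
    finally have "1 / (1 + norm z) ^ (2 * DIM('a)) \<le> (\<Prod>b\<in>(Basis::'a set). 1 / (1 + \<bar>z \<bullet> b\<bar>) ^ 2)"
      by (simp add: prod_dividef frac_le prod_pos)
    then show "ennreal (1 / (1 + norm z) ^ (2 * DIM('a))) \<le> (\<Prod>b\<in>Basis. ennreal (1 / (1 + \<bar>z \<bullet> b\<bar>) ^ 2))"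
      by (simp add: prod_ennreal ennreal_leI)
  qed
  also have "\<dots> = (\<Prod>b\<in>(Basis::'a set). (\<integral>\<^sup>+ x. ennreal (1 / (1 + \<bar>x\<bar>) ^ 2) \<partial>lborel))"
    by (rule nn_integral_lborel_prod) auto
  also have "\<dots> < \<infinity>" using nn_integral_one_plus_abs_sq by (simp add: power_less_top_ennreal)
  finally show ?thesis .
qed

lemma nn_integral_inverse_finite:
  fixes s :: "'a::euclidean_space \<Rightarrow> real"
  assumes \<kappa>: "\<kappa> > 0" and s: "\<And>z. \<kappa> * (1 + norm z) ^ (2 * DIM('a)) \<le> s z"
  shows "(\<integral>\<^sup>+ z. ennreal (1 / s z) \<partial>lborel) < \<infinity>"
proof -
  have "(\<integral>\<^sup>+ z. ennreal (1 / s z) \<partial>lborel)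
      \<le> (\<integral>\<^sup>+ z. ennreal (1 / \<kappa>) * ennreal (1 / (1 + norm z) ^ (2 * DIM('a))) \<partial>(lborel :: 'a measure))"
  proof (rule nn_integral_mono)
    fix z :: 'a
    have "0 < \<kappa> * (1 + norm z) ^ (2 * DIM('a))"
      using \<kappa> by (intro mult_pos_pos zero_less_power) (auto simp: add_pos_nonneg)
    then have "1 / s z \<le> 1 / \<kappa> * (1 / (1 + norm z) ^ (2 * DIM('a)))"
      using s[of z] by (simp add: divide_left_mono)
    then show "ennreal (1 / s z) \<le> ennreal (1 / \<kappa>) * ennreal (1 / (1 + norm z) ^ (2 * DIM('a)))"
      using \<kappa> by (simp add: ennreal_leI ennreal_mult[symmetric])
  qed
  also have "\<dots> = ennreal (1 / \<kappa>) *
      (\<integral>\<^sup>+ z. ennreal (1 / (1 + norm z) ^ (2 * DIM('a))) \<partial>(lborel :: 'a measure))"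
    by (rule nn_integral_cmult) simp
  also have "\<dots> < \<infinity>" using nn_integral_poly_decay[where 'a='a] by (simp add: ennreal_mult_less_top)
  finally show ?thesis .
qed

theorem mainTheorem2:
  fixes br :: "'g::euclidean_space \<Rightarrow> 'g \<Rightarrow> 'g"
    and N T :: "'g set" and X :: 'g and U :: "('g \<times> 'g) set"
  assumes "lie_algebra br"
    and "solvable_lie br"
    and "nilradical br N"
    and "\<forall>lam mu. is_root br lam \<and> is_root br mu \<and> lam \<noteq> mu \<longrightarrow> lam X \<noteq> mu X"
    and "subspace T" and "T \<subseteq> gzero br X"
    and "T \<inter> N = {0}" and "{t + n | t n. t \<in> T \<and> n \<in> N} = UNIV"
    and "sym_compact_nbhd br T N U"
  shows "\<exists>p::nat. (\<integral>\<^sup>+ z. ennreal (1 / sigma br T N U (projT T N z, z - projT T N z) ^ p) \<partial>lborel) < \<infinity>"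
proof -
  interpret compact_nbhd br N T U
    using assms(1,3,5,7-9)
    by unfold_locales (auto simp: nilradical_def sym_compact_nbhd_def lie_def)
  obtain \<kappa> p where "\<kappa> > 0"
    and "\<And>z. \<kappa> * (1 + norm z) ^ (2 * DIM('g)) \<le> sigma br T N U (projT T N z, z - projT T N z) ^ p"
    using sigma_poly_lower_bound by blast
  then have "(\<integral>\<^sup>+ z. ennreal (1 / sigma br T N U (projT T N z, z - projT T N z) ^ p) \<partial>lborel) < \<infinity>"
    by (rule nn_integral_inverse_finite)
  then show ?thesis by blast
qed

end
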